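(* Let $\mathcal C$ be a Markov category in which, for every object $X$, the copy morphism $\mathrm{copy}_X$ is an initial dilation of $\mathrm{id}_X$. Then every non-creative morphism of $\mathcal C$ is deterministic, and the class of non-creative morphisms equals the class of deterministic morphisms if and only if $\mathcal C$ is positive.
   Context: A Markov category is a symmetric monoidal category $(\mathcal C,\otimes,I)$ with commutative comonoids $\mathrm{copy}_X\colon X\to X\otimes X$, $\mathrm{del}_X\colon X\to I$ compatible with $\otimes$, with $I$ terminal. $f\colon A\to X$ is deterministic if $\mathrm{copy}_X\circ f=(f\otimes f)\circ\mathrm{copy}_A$. $\mathcal C$ is positive if for all $f\colon X\to Y$, $g\colon Y\to Z$ with $g\circ f$ deterministic, $(\mathrm{id}_Y\otimes g)\circ\mathrm{copy}_Y\circ f=(f\otimes (g\circ f))\circ\mathrm{copy}_X$. A dilation of $p\colon A\to X$ is $\pi\colon A\to X\otimes E$ with $(\mathrm{id}_X\otimes\mathrm{del}_E)\circ\pi=p$. For a dilation $\pi\colon A\to X\otimes E$ and $f_1,f_2\colon E\to E'$, these are $\pi$-dilationally equal if for every dilation $\rho\colon A\to X\otimes E\otimes F$ of $\pi$, $(\mathrm{id}_X\otimes f_1\otimes\mathrm{id}_F)\circ\rho=(\mathrm{id}_X\otimes f_2\otimes\mathrm{id}_F)\circ\rho$. A dilation $\pi\colon A\to X\otimes E$ of $p$ is initial if for every dilation $\pi'\colon A\to X\otimes E'$ of $p$ there is $f\colon E\to E'$ with $(\mathrm{id}_X\otimes f)\circ\pi=\pi'$, unique up to $\pi$-dilational equality.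 A morphism $p\colon A\to X$ is non-creative if every dilation $\pi\colon A\to X\otimes E$ of $p$ equals $(p\otimes\mathrm{id}_E)\circ\iota$ for some dilation $\iota\colon A\to A\otimes E$ of $\mathrm{id}_A$. *)

theory Defs
  imports Main
begin

text \<open>A (strict) symmetric monoidal category with chosen copy/delete maps.
  Morphisms are elements of Arr with domain Dom and codomain Cod;
  Comp C g f is the composite g after f.\<close>

record ('o, 'm) mcat =
  Obj  :: "'o set"
  Arr  :: "'m set"
  Dom  :: "'m \<Rightarrow> 'o"
  Cod  :: "'m \<Rightarrow> 'o"
  Comp :: "'m \<Rightarrow> 'm \<Rightarrow> 'm"
  Idm  :: "'o \<Rightarrow> 'm"
  TensO :: "'o \<Rightarrow> 'o \<Rightarrow> 'o"
  TensM :: "'m \<Rightarrow> 'm \<Rightarrow> 'm"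
  Unit :: "'o"
  Swap :: "'o \<Rightarrow> 'o \<Rightarrow> 'm"
  Copy :: "'o \<Rightarrow> 'm"
  Del  :: "'o \<Rightarrow> 'm"

definition hom :: "('o, 'm, 'x) mcat_scheme \<Rightarrow> 'o \<Rightarrow> 'o \<Rightarrow> 'm set" where
  "hom C A B = {f \<in> Arr C. Dom C f = A \<and> Cod C f = B}"

locale markov_category =
  fixes C :: "('o, 'm, 'x) mcat_scheme"
  assumes dom_obj: "f \<in> Arr C \<Longrightarrow> Dom C f \<in> Obj C"
    and cod_obj: "f \<in> Arr C \<Longrightarrow> Cod C f \<in> Obj C"
    and comp_hom: "\<lbrakk>f \<in> hom C A B; g \<in> hom C B D\<rbrakk> \<Longrightarrow> Comp C g f \<in> hom C A D"
    and comp_assoc: "\<lbrakk>f \<in> hom C A B; g \<in> hom C B D; h \<in> hom C D E\<rbrakk> \<Longrightarrow>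
        Comp C h (Comp C g f) = Comp C (Comp C h g) f"
    and id_hom: "A \<in> Obj C \<Longrightarrow> Idm C A \<in> hom C A A"
    and id_left: "f \<in> Arr C \<Longrightarrow> Comp C (Idm C (Cod C f)) f = f"
    and id_right: "f \<in> Arr C \<Longrightarrow> Comp C f (Idm C (Dom C f)) = f"
    and tens_obj: "\<lbrakk>A \<in> Obj C; B \<in> Obj C\<rbrakk> \<Longrightarrow> TensO C A B \<in> Obj C"
    and unit_obj: "Unit C \<in> Obj C"
    and tens_hom: "\<lbrakk>f \<in> hom C A B; g \<in> hom C A' B'\<rbrakk> \<Longrightarrow>
        TensM C f g \<in> hom C (TensO C A A') (TensO C B B')"
    and tens_id: "\<lbrakk>A \<in> Obj C; B \<in> Obj C\<rbrakk> \<Longrightarrow> TensM C (Idm C A) (Idm C B) = Idm C (TensO C A B)"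
    and tens_comp: "\<lbrakk>f1 \<in> hom C A B; g1 \<in> hom C B D; f2 \<in> hom C A' B'; g2 \<in> hom C B' D'\<rbrakk> \<Longrightarrow>
        TensM C (Comp C g1 f1) (Comp C g2 f2) = Comp C (TensM C g1 g2) (TensM C f1 f2)"
    and tens_assoc_obj: "\<lbrakk>A \<in> Obj C; B \<in> Obj C; D \<in> Obj C\<rbrakk> \<Longrightarrow>
        TensO C (TensO C A B) D = TensO C A (TensO C B D)"
    and tens_assoc_arr: "\<lbrakk>f \<in> Arr C; g \<in> Arr C; h \<in> Arr C\<rbrakk> \<Longrightarrow>
        TensM C (TensM C f g) h = TensM C f (TensM C g h)"
    and unit_left_obj: "A \<in> Obj C \<Longrightarrow> TensO C (Unit C) A = A"
    and unit_right_obj: "A \<in> Obj C \<Longrightarrow> TensO C A (Unit C) = A"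
    and unit_left_arr: "f \<in> Arr C \<Longrightarrow> TensM C (Idm C (Unit C)) f = f"
    and unit_right_arr: "f \<in> Arr C \<Longrightarrow> TensM C f (Idm C (Unit C)) = f"
    and swap_hom: "\<lbrakk>A \<in> Obj C; B \<in> Obj C\<rbrakk> \<Longrightarrow> Swap C A B \<in> hom C (TensO C A B) (TensO C B A)"
    and swap_nat: "\<lbrakk>f \<in> hom C A B; g \<in> hom C A' B'\<rbrakk> \<Longrightarrow>
        Comp C (Swap C B B') (TensM C f g) = Comp C (TensM C g f) (Swap C A A')"
    and swap_inv: "\<lbrakk>A \<in> Obj C; B \<in> Obj C\<rbrakk> \<Longrightarrow>
        Comp C (Swap C B A) (Swap C A B) = Idm C (TensO C A B)"
    and swap_hexagon: "\<lbrakk>A \<in> Obj C; B \<in> Obj C; D \<in> Obj C\<rbrakk> \<Longrightarrow>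
        Swap C A (TensO C B D) =
        Comp C (TensM C (Idm C B) (Swap C A D)) (TensM C (Swap C A B) (Idm C D))"
    and copy_hom: "A \<in> Obj C \<Longrightarrow> Copy C A \<in> hom C A (TensO C A A)"
    and del_hom: "A \<in> Obj C \<Longrightarrow> Del C A \<in> hom C A (Unit C)"
    and counit_left: "A \<in> Obj C \<Longrightarrow> Comp C (TensM C (Del C A) (Idm C A)) (Copy C A) = Idm C A"
    and counit_right: "A \<in> Obj C \<Longrightarrow> Comp C (TensM C (Idm C A) (Del C A)) (Copy C A) = Idm C A"
    and coassoc: "A \<in> Obj C \<Longrightarrow>
        Comp C (TensM C (Copy C A) (Idm C A)) (Copy C A) =
        Comp C (TensM C (Idm C A) (Copy C A)) (Copy C A)"
    and cocomm: "A \<in> Obj C \<Longrightarrow> Comp C (Swap C A A) (Copy C A) = Copy C A"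
    and copy_tens: "\<lbrakk>A \<in> Obj C; B \<in> Obj C\<rbrakk> \<Longrightarrow>
        Copy C (TensO C A B) =
        Comp C (TensM C (Idm C A) (TensM C (Swap C A B) (Idm C B))) (TensM C (Copy C A) (Copy C B))"
    and del_tens: "\<lbrakk>A \<in> Obj C; B \<in> Obj C\<rbrakk> \<Longrightarrow>
        Del C (TensO C A B) = TensM C (Del C A) (Del C B)"
    and copy_unit: "Copy C (Unit C) = Idm C (Unit C)"
    and del_unit: "Del C (Unit C) = Idm C (Unit C)"
    and unit_terminal: "f \<in> hom C A (Unit C) \<Longrightarrow> f = Del C A"

definition deterministic :: "('o, 'm, 'x) mcat_scheme \<Rightarrow> 'm \<Rightarrow> bool" where
  "deterministic C f \<longleftrightarrow> f \<in> Arr C \<and>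
     Comp C (Copy C (Cod C f)) f = Comp C (TensM C f f) (Copy C (Dom C f))"

definition positive :: "('o, 'm, 'x) mcat_scheme \<Rightarrow> bool" where
  "positive C \<longleftrightarrow> (\<forall>X Y Z f g. f \<in> hom C X Y \<longrightarrow> g \<in> hom C Y Z \<longrightarrow>
      deterministic C (Comp C g f) \<longrightarrow>
      Comp C (TensM C (Idm C Y) g) (Comp C (Copy C Y) f) =
      Comp C (TensM C f (Comp C g f)) (Copy C X))"

definition dilation :: "('o, 'm, 'x) mcat_scheme \<Rightarrow> 'm \<Rightarrow> 'o \<Rightarrow> 'm \<Rightarrow> bool" where
  "dilation C p E \<pi> \<longleftrightarrow> p \<in> Arr C \<and> E \<in> Obj C \<and>
     \<pi> \<in> hom C (Dom C p) (TensO C (Cod C p) E) \<and>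
     Comp C (TensM C (Idm C (Cod C p)) (Del C E)) \<pi> = p"

definition dil_equal :: "('o, 'm, 'x) mcat_scheme \<Rightarrow> 'm \<Rightarrow> 'o \<Rightarrow> 'o \<Rightarrow> 'm \<Rightarrow> 'm \<Rightarrow> bool" where
  "dil_equal C \<pi> X E f1 f2 \<longleftrightarrow>
     (\<forall>F \<rho>. dilation C \<pi> F \<rho> \<longrightarrow>
        Comp C (TensM C (Idm C X) (TensM C f1 (Idm C F))) \<rho> =
        Comp C (TensM C (Idm C X) (TensM C f2 (Idm C F))) \<rho>)"

definition initial_dilation :: "('o, 'm, 'x) mcat_scheme \<Rightarrow> 'm \<Rightarrow> 'o \<Rightarrow> 'm \<Rightarrow> bool" where
  "initial_dilation C p E \<pi> \<longleftrightarrow> dilation C p E \<pi> \<and>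
     (\<forall>E' \<pi>'. dilation C p E' \<pi>' \<longrightarrow>
        (\<exists>f \<in> hom C E E'. Comp C (TensM C (Idm C (Cod C p)) f) \<pi> = \<pi>') \<and>
        (\<forall>f1 \<in> hom C E E'. \<forall>f2 \<in> hom C E E'.
            Comp C (TensM C (Idm C (Cod C p)) f1) \<pi> = \<pi>' \<longrightarrow>
            Comp C (TensM C (Idm C (Cod C p)) f2) \<pi> = \<pi>' \<longrightarrow>
            dil_equal C \<pi> (Cod C p) E f1 f2))"

definition non_creative :: "('o, 'm, 'x) mcat_scheme \<Rightarrow> 'm \<Rightarrow> bool" where
  "non_creative C p \<longleftrightarrow> p \<in> Arr C \<and>
     (\<forall>E \<pi>. dilation C p E \<pi> \<longrightarrow>
        (\<exists>\<iota>. dilation C (Idm C (Dom C p)) E \<iota> \<and>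
             \<pi> = Comp C (TensM C p (Idm C E)) \<iota>))"

end

(* Since copy is an initial dilation of the identity, every dilation of id_A has the form
   (id \<otimes> h) \<circ> copy_A. Hence p is non-creative exactly when every dilation \<pi> of p is the
   pairing (p \<otimes> \<pi>_E) \<circ> copy of p with its environment marginal \<pi>_E. For \<pi> = copy \<circ> p this
   says that p is deterministic. If p is deterministic and C is positive, positivity applied
   to \<pi> and its deterministic marginal p decouples \<pi> into exactly this pairing. Conversely,
   if deterministic morphisms are non-creative and g \<circ> f is deterministic, splitting the
   dilation (g \<otimes> id) \<circ> copy \<circ> f of g \<circ> f in this way gives the positivity equation. *)

theory Submission
  imports Defs
begin

context markov_category
begin

abbreviation comp_syntax (infixr "\<cdot>" 55) where "g \<cdot> f \<equiv> Comp C g f"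
abbreviation tens_syntax (infixr "\<otimes>" 60) where "f \<otimes> g \<equiv> TensM C f g"

abbreviation pairing :: "'m \<Rightarrow> 'm \<Rightarrow> 'm" where
  "pairing a b \<equiv> (a \<otimes> b) \<cdot> Copy C (Dom C a)"

lemma obj_closed [simp]:
  "f \<in> Arr C \<Longrightarrow> Dom C f \<in> Obj C"
  "f \<in> Arr C \<Longrightarrow> Cod C f \<in> Obj C"
  "A \<in> Obj C \<Longrightarrow> B \<in> Obj C \<Longrightarrow> TensO C A B \<in> Obj C"
  "Unit C \<in> Obj C"
  using dom_obj cod_obj tens_obj unit_obj by auto

lemma tens_obj_simps [simp]:
  "A \<in> Obj C \<Longrightarrow> B \<in> Obj C \<Longrightarrow> D \<in> Obj C \<Longrightarrow> TensO C (TensO C A B) D = TensO C A (TensO C B D)"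
  "A \<in> Obj C \<Longrightarrow> TensO C (Unit C) A = A"
  "A \<in> Obj C \<Longrightarrow> TensO C A (Unit C) = A"
  using tens_assoc_obj unit_left_obj unit_right_obj by auto

lemma idm_simps [simp]:
  "A \<in> Obj C \<Longrightarrow> Idm C A \<in> Arr C"
  "A \<in> Obj C \<Longrightarrow> Dom C (Idm C A) = A"
  "A \<in> Obj C \<Longrightarrow> Cod C (Idm C A) = A"
  using id_hom by (auto simp: hom_def)

lemma comp_simps [simp]:
  assumes "f \<in> Arr C" "g \<in> Arr C" "Cod C f = Dom C g"
  shows "g \<cdot> f \<in> Arr C" "Dom C (g \<cdot> f) = Dom C f" "Cod C (g \<cdot> f) = Cod C g"
  using comp_hom[of f "Dom C f" "Cod C f" g "Cod C g"] assms by (auto simp: hom_def)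

lemma tens_simps [simp]:
  assumes "f \<in> Arr C" "g \<in> Arr C"
  shows "f \<otimes> g \<in> Arr C" "Dom C (f \<otimes> g) = TensO C (Dom C f) (Dom C g)"
    "Cod C (f \<otimes> g) = TensO C (Cod C f) (Cod C g)"
  using tens_hom[of f "Dom C f" "Cod C f" g "Dom C g" "Cod C g"] assms by (auto simp: hom_def)

lemma copy_simps [simp]:
  "A \<in> Obj C \<Longrightarrow> Copy C A \<in> Arr C"
  "A \<in> Obj C \<Longrightarrow> Dom C (Copy C A) = A"
  "A \<in> Obj C \<Longrightarrow> Cod C (Copy C A) = TensO C A A"
  using copy_hom by (auto simp: hom_def)

lemma del_simps [simp]:
  "A \<in> Obj C \<Longrightarrow> Del C A \<in> Arr C"
  "A \<in> Obj C \<Longrightarrow> Dom C (Del C A) = A"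
  "A \<in> Obj C \<Longrightarrow> Cod C (Del C A) = Unit C"
  using del_hom by (auto simp: hom_def)

lemma swap_simps [simp]:
  "A \<in> Obj C \<Longrightarrow> B \<in> Obj C \<Longrightarrow> Swap C A B \<in> Arr C"
  "A \<in> Obj C \<Longrightarrow> B \<in> Obj C \<Longrightarrow> Dom C (Swap C A B) = TensO C A B"
  "A \<in> Obj C \<Longrightarrow> B \<in> Obj C \<Longrightarrow> Cod C (Swap C A B) = TensO C B A"
  using swap_hom by (auto simp: hom_def)

lemma comp_assoc':
  assumes "f \<in> Arr C" "g \<in> Arr C" "h \<in> Arr C" "Cod C f = Dom C g" "Cod C g = Dom C h"
  shows "(h \<cdot> g) \<cdot> f = h \<cdot> (g \<cdot> f)"
  using comp_assoc[of f "Dom C f" "Cod C f" g "Cod C g" h "Cod C h"] assms by (auto simp: hom_def)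

lemma comp_idm_left: "f \<in> Arr C \<Longrightarrow> Cod C f = A \<Longrightarrow> Idm C A \<cdot> f = f"
  using id_left by auto

lemma comp_idm_right: "f \<in> Arr C \<Longrightarrow> Dom C f = A \<Longrightarrow> f \<cdot> Idm C A = f"
  using id_right by auto

lemma interchange:
  assumes "f1 \<in> Arr C" "g1 \<in> Arr C" "f2 \<in> Arr C" "g2 \<in> Arr C"
    "Cod C f1 = Dom C g1" "Cod C f2 = Dom C g2"
  shows "(g1 \<otimes> g2) \<cdot> (f1 \<otimes> f2) = (g1 \<cdot> f1) \<otimes> (g2 \<cdot> f2)"
  using tens_comp[of f1 "Dom C f1" "Cod C f1" g1 "Cod C g1" f2 "Dom C f2" "Cod C f2" g2 "Cod C g2"]
    assms by (auto simp: hom_def)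

lemma tens_idm: "A \<in> Obj C \<Longrightarrow> B \<in> Obj C \<Longrightarrow> Idm C A \<otimes> Idm C B = Idm C (TensO C A B)"
  using tens_id by auto

lemma del_comp: "f \<in> Arr C \<Longrightarrow> Cod C f = Y \<Longrightarrow> Del C Y \<cdot> f = Del C (Dom C f)"
  by (rule unit_terminal) (auto simp: hom_def)

lemma pairing_comp:
  assumes "a \<in> Arr C" "b \<in> Arr C" "Dom C b = Dom C a" "f \<in> Arr C" "g \<in> Arr C"
    "Dom C f = Cod C a" "Dom C g = Cod C b"
  shows "(f \<otimes> g) \<cdot> pairing a b = pairing (f \<cdot> a) (g \<cdot> b)"
  using assms by (simp add: comp_assoc'[symmetric] interchange)

lemma pairing_del_right:
  assumes "a \<in> Arr C"
  shows "pairing a (Del C (Dom C a)) = a"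
proof -
  let ?A = "Dom C a"
  have "a \<otimes> Del C ?A = (a \<otimes> Idm C (Unit C)) \<cdot> (Idm C ?A \<otimes> Del C ?A)"
    using assms by (simp add: interchange comp_idm_left comp_idm_right)
  then show ?thesis
    using assms by (simp add: unit_right_arr comp_assoc' counit_right comp_idm_right)
qed

lemma pairing_del_left:
  assumes "b \<in> Arr C"
  shows "pairing (Del C (Dom C b)) b = b"
proof -
  let ?A = "Dom C b"
  have "Del C ?A \<otimes> b = (Idm C (Unit C) \<otimes> b) \<cdot> (Del C ?A \<otimes> Idm C ?A)"
    using assms by (simp add: interchange comp_idm_left comp_idm_right)
  then show ?thesis
    using assms by (simp add: unit_left_arr comp_assoc' counit_left comp_idm_right)
qed

lemma fst_pairing:
  assumes "a \<in> Arr C" "b \<in> Arr C" "Dom C b = Dom C a"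
  shows "(Idm C (Cod C a) \<otimes> Del C (Cod C b)) \<cdot> pairing a b = a"
  using assms by (simp add: pairing_comp comp_idm_left del_comp pairing_del_right)

lemma snd_pairing:
  assumes "a \<in> Arr C" "b \<in> Arr C" "Dom C b = Dom C a"
  shows "(Del C (Cod C a) \<otimes> Idm C (Cod C b)) \<cdot> pairing a b = b"
  using assms pairing_del_left[of b]
  by (simp add: pairing_comp comp_idm_left del_comp)

lemma swap_pairing:
  assumes "a \<in> Arr C" "b \<in> Arr C" "Dom C b = Dom C a"
  shows "Swap C (Cod C a) (Cod C b) \<cdot> pairing a b = pairing b a"
proof -
  let ?A = "Dom C a"
  have "Swap C (Cod C a) (Cod C b) \<cdot> pairing a b = ((b \<otimes> a) \<cdot> Swap C ?A ?A) \<cdot> Copy C ?A"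
    using assms swap_nat[of a ?A "Cod C a" b ?A "Cod C b"]
    by (simp add: hom_def comp_assoc'[symmetric])
  then show ?thesis
    using assms by (simp add: comp_assoc' cocomm)
qed

lemma swap_as_copy_marginal:
  assumes X: "X \<in> Obj C" and E: "E \<in> Obj C"
  shows "((Del C X \<otimes> Idm C E) \<otimes> (Idm C X \<otimes> Del C E)) \<cdot> Copy C (TensO C X E) = Swap C X E"
proof -
  have "(Del C X \<otimes> Idm C E) \<otimes> (Idm C X \<otimes> Del C E) = Del C X \<otimes> (Idm C (TensO C E X) \<otimes> Del C E)"
    using X E by (simp add: tens_assoc_arr tens_idm[symmetric])
  then have "((Del C X \<otimes> Idm C E) \<otimes> (Idm C X \<otimes> Del C E)) \<cdot> (Idm C X \<otimes> (Swap C X E \<otimes> Idm C E))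
      = Del C X \<otimes> (Swap C X E \<otimes> Del C E)"
    using X E by (simp add: interchange comp_idm_left comp_idm_right)
  also have "\<dots> = (Idm C (Unit C) \<otimes> (Swap C X E \<otimes> Idm C (Unit C))) \<cdot>
      (Del C X \<otimes> (Idm C (TensO C X E) \<otimes> Del C E))"
    using X E by (simp add: interchange comp_idm_left comp_idm_right)
  also have "\<dots> = Swap C X E \<cdot> ((Del C X \<otimes> Idm C X) \<otimes> (Idm C E \<otimes> Del C E))"
    using X E by (simp add: unit_left_arr unit_right_arr tens_assoc_arr tens_idm[symmetric])
  finally have "((Del C X \<otimes> Idm C E) \<otimes> (Idm C X \<otimes> Del C E)) \<cdot> Copy C (TensO C X E)
      = Swap C X E \<cdot> (((Del C X \<otimes> Idm C X) \<otimes> (Idm C E \<otimes> Del C E)) \<cdot> (Copy C X \<otimes> Copy C E))"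
    using X E by (simp add: copy_tens comp_assoc'[symmetric])
  then show ?thesis
    using X E by (simp add: interchange counit_left counit_right tens_idm comp_idm_right)
qed

lemma pairing_dilation:
  assumes "a \<in> Arr C" "h \<in> hom C (Dom C a) E"
  shows "dilation C a E (pairing a h)"
  using assms fst_pairing[of a h] by (auto simp: dilation_def hom_def)

lemma copy_dilation: "X \<in> Obj C \<Longrightarrow> dilation C (Idm C X) X (Copy C X)"
  using counit_right by (simp add: dilation_def hom_def)

lemma dilation_comp:
  assumes "dilation C g E \<pi>" "f \<in> Arr C" "Cod C f = Dom C g"
  shows "dilation C (g \<cdot> f) E (\<pi> \<cdot> f)"
  using assms by (auto simp: dilation_def hom_def comp_assoc'[symmetric])

lemma dilation_idm_eq_pairing:
  assumes "initial_dilation C (Idm C X) X (Copy C X)" "X \<in> Obj C" "dilation C (Idm C X) E \<iota>"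
  shows "\<exists>h \<in> hom C X E. \<iota> = pairing (Idm C X) h"
  using assms unfolding initial_dilation_def by fastforce

lemma non_creative_dilation_eq_pairing:
  assumes init: "initial_dilation C (Idm C (Dom C p)) (Dom C p) (Copy C (Dom C p))"
    and nc: "non_creative C p" and dil: "dilation C p E \<pi>"
  shows "\<pi> = pairing p ((Del C (Cod C p) \<otimes> Idm C E) \<cdot> \<pi>)"
proof -
  let ?A = "Dom C p"
  have p: "p \<in> Arr C" and E: "E \<in> Obj C"
    using dil by (auto simp: dilation_def)
  obtain \<iota> where \<iota>: "dilation C (Idm C ?A) E \<iota>" and \<pi>: "\<pi> = (p \<otimes> Idm C E) \<cdot> \<iota>"
    using nc dil unfolding non_creative_def by blast
  obtain h where h: "h \<in> hom C ?A E" and "\<iota> = pairing (Idm C ?A) h"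
    using dilation_idm_eq_pairing[OF init _ \<iota>] p by auto
  then have "\<pi> = pairing p h"
    using \<pi> p E h pairing_comp[of "Idm C ?A" h p "Idm C E"]
    by (simp add: hom_def comp_idm_left comp_idm_right)
  moreover have "(Del C (Cod C p) \<otimes> Idm C E) \<cdot> pairing p h = h"
    using snd_pairing[of p h] p h by (simp add: hom_def)
  ultimately show ?thesis by simp
qed

lemma non_creative_if_dilations_eq_pairing:
  assumes p: "p \<in> Arr C"
    and split: "\<And>E \<pi>. dilation C p E \<pi> \<Longrightarrow> \<pi> = pairing p ((Del C (Cod C p) \<otimes> Idm C E) \<cdot> \<pi>)"
  shows "non_creative C p"
  unfolding non_creative_def
proof (intro conjI allI impI p)
  fix E \<pi>
  assume dil: "dilation C p E \<pi>"
  let ?A = "Dom C p" and ?\<pi>\<^sub>E = "(Del C (Cod C p) \<otimes> Idm C E) \<cdot> \<pi>"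
  have E: "E \<in> Obj C" and \<pi>\<^sub>E: "?\<pi>\<^sub>E \<in> hom C ?A E"
    using dil p by (auto simp: dilation_def hom_def)
  have "dilation C (Idm C ?A) E (pairing (Idm C ?A) ?\<pi>\<^sub>E)"
    using pairing_dilation[of "Idm C ?A" ?\<pi>\<^sub>E E] \<pi>\<^sub>E p by simp
  moreover have "(p \<otimes> Idm C E) \<cdot> pairing (Idm C ?A) ?\<pi>\<^sub>E = \<pi>"
    using split[OF dil] E \<pi>\<^sub>E p pairing_comp[of "Idm C ?A" ?\<pi>\<^sub>E p "Idm C E"]
    by (simp add: hom_def comp_idm_left comp_idm_right)
  ultimately show "\<exists>\<iota>. dilation C (Idm C ?A) E \<iota> \<and> \<pi> = (p \<otimes> Idm C E) \<cdot> \<iota>"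
    by metis
qed

lemma non_creative_imp_deterministic:
  assumes init: "initial_dilation C (Idm C (Dom C p)) (Dom C p) (Copy C (Dom C p))"
    and nc: "non_creative C p"
  shows "deterministic C p"
proof -
  let ?X = "Cod C p"
  have p: "p \<in> Arr C"
    using nc by (simp add: non_creative_def)
  have "dilation C p ?X (Copy C ?X \<cdot> p)"
    using dilation_comp[OF copy_dilation[of ?X], of p] p by (simp add: comp_idm_left)
  then have "Copy C ?X \<cdot> p = pairing p ((Del C ?X \<otimes> Idm C ?X) \<cdot> (Copy C ?X \<cdot> p))"
    by (rule non_creative_dilation_eq_pairing[OF init nc])
  also have "(Del C ?X \<otimes> Idm C ?X) \<cdot> (Copy C ?X \<cdot> p) = p"
    using p by (simp add: comp_assoc'[symmetric] counit_left comp_idm_left)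
  finally show ?thesis
    using p by (simp add: deterministic_def)
qed

lemma positive_deterministic_dilation_eq_pairing:
  assumes pos: "positive C" and det: "deterministic C p" and dil: "dilation C p E \<pi>"
  shows "\<pi> = pairing p ((Del C (Cod C p) \<otimes> Idm C E) \<cdot> \<pi>)"
proof -
  let ?X = "Cod C p" and ?XE = "TensO C (Cod C p) E"
  let ?\<pi>\<^sub>E = "(Del C ?X \<otimes> Idm C E) \<cdot> \<pi>" and ?g = "Idm C ?X \<otimes> Del C E"
  have p: "p \<in> Arr C" and E: "E \<in> Obj C" and \<pi>: "\<pi> \<in> hom C (Dom C p) ?XE"
    and marg: "?g \<cdot> \<pi> = p"
    using dil by (auto simp: dilation_def)
  have g: "?g \<in> hom C ?XE ?X"
    using p E by (simp add: hom_def)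
  have "Swap C ?X E \<cdot> \<pi>
      = ((((Del C ?X \<otimes> Idm C E) \<otimes> Idm C ?X) \<cdot> (Idm C ?XE \<otimes> ?g)) \<cdot> Copy C ?XE) \<cdot> \<pi>"
    using p E swap_as_copy_marginal[of ?X E]
    by (simp add: interchange comp_idm_left comp_idm_right)
  also have "\<dots> = ((Del C ?X \<otimes> Idm C E) \<otimes> Idm C ?X) \<cdot> ((Idm C ?XE \<otimes> ?g) \<cdot> (Copy C ?XE \<cdot> \<pi>))"
    using p E \<pi> by (simp add: hom_def comp_assoc')
  also have "(Idm C ?XE \<otimes> ?g) \<cdot> (Copy C ?XE \<cdot> \<pi>) = pairing \<pi> p"
    using pos[unfolded positive_def, rule_format, OF \<pi> g] det marg \<pi> by (simp add: hom_def)
  also have "((Del C ?X \<otimes> Idm C E) \<otimes> Idm C ?X) \<cdot> pairing \<pi> p = pairing ?\<pi>\<^sub>E p"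
    using p E \<pi> pairing_comp[of \<pi> p "Del C ?X \<otimes> Idm C E" "Idm C ?X"]
    by (simp add: hom_def comp_idm_left)
  finally have swapped: "Swap C ?X E \<cdot> \<pi> = pairing ?\<pi>\<^sub>E p" .
  have "\<pi> = Swap C E ?X \<cdot> (Swap C ?X E \<cdot> \<pi>)"
    using p E \<pi> by (simp add: hom_def comp_assoc'[symmetric] swap_inv comp_idm_left)
  also have "\<dots> = pairing p ?\<pi>\<^sub>E"
    using p E \<pi> swap_pairing[of ?\<pi>\<^sub>E p] by (simp add: swapped hom_def)
  finally show ?thesis .
qed

lemma positive_deterministic_imp_non_creative:
  assumes "positive C" "deterministic C p"
  shows "non_creative C p"
  using assms positive_deterministic_dilation_eq_pairing
  by (intro non_creative_if_dilations_eq_pairing) (auto simp: deterministic_def)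

lemma positive_if_deterministic_imp_non_creative:
  assumes init: "\<forall>X \<in> Obj C. initial_dilation C (Idm C X) X (Copy C X)"
    and det_nc: "\<forall>p \<in> Arr C. deterministic C p \<longrightarrow> non_creative C p"
  shows "positive C"
  unfolding positive_def
proof (intro allI impI)
  fix X Y Z f g
  assume f: "f \<in> hom C X Y" and g: "g \<in> hom C Y Z" and det: "deterministic C (g \<cdot> f)"
  have X: "X \<in> Obj C" and Y: "Y \<in> Obj C" and Z: "Z \<in> Obj C"
    using f g by (auto simp: hom_def)
  let ?\<pi> = "pairing g (Idm C Y) \<cdot> f"
  have "dilation C (g \<cdot> f) Y ?\<pi>"
    using dilation_comp[OF pairing_dilation[of g "Idm C Y" Y]] f g Y by (simp add: hom_def)
  moreover have "non_creative C (g \<cdot> f)"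
    using det_nc det by (simp add: deterministic_def)
  moreover have "initial_dilation C (Idm C (Dom C (g \<cdot> f))) (Dom C (g \<cdot> f)) (Copy C (Dom C (g \<cdot> f)))"
    using init X f g by (simp add: hom_def)
  ultimately have "?\<pi> = pairing (g \<cdot> f) ((Del C (Cod C (g \<cdot> f)) \<otimes> Idm C Y) \<cdot> ?\<pi>)"
    using non_creative_dilation_eq_pairing by blast
  also have "(Del C (Cod C (g \<cdot> f)) \<otimes> Idm C Y) \<cdot> ?\<pi> = f"
    using f g Y Z snd_pairing[of g "Idm C Y"] by (simp add: hom_def comp_assoc'[symmetric] comp_idm_left)
  finally have split: "?\<pi> = pairing (g \<cdot> f) f" .
  have "(Idm C Y \<otimes> g) \<cdot> (Copy C Y \<cdot> f) = (Swap C Z Y \<cdot> pairing g (Idm C Y)) \<cdot> f"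
    using f g Y Z swap_pairing[of g "Idm C Y"] by (simp add: hom_def comp_assoc')
  also have "\<dots> = Swap C Z Y \<cdot> pairing (g \<cdot> f) f"
    using f g Y Z split by (simp add: hom_def comp_assoc')
  also have "\<dots> = (f \<otimes> (g \<cdot> f)) \<cdot> Copy C X"
    using f g swap_pairing[of "g \<cdot> f" f] by (simp add: hom_def)
  finally show "(Idm C Y \<otimes> g) \<cdot> (Copy C Y \<cdot> f) = (f \<otimes> (g \<cdot> f)) \<cdot> Copy C X" .
qed

end

theorem lemma4p15:
  fixes C :: "('o, 'm, 'x) mcat_scheme"
  assumes "markov_category C"
    and "\<forall>X \<in> Obj C. initial_dilation C (Idm C X) X (Copy C X)"
  shows "(\<forall>p \<in> Arr C. non_creative C p \<longrightarrow> deterministic C p) \<and>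
         ((\<forall>p \<in> Arr C. non_creative C p \<longleftrightarrow> deterministic C p) \<longleftrightarrow> positive C)"
proof -
  interpret markov_category C by (rule assms(1))
  have "non_creative C p \<Longrightarrow> deterministic C p" if "p \<in> Arr C" for p
    using non_creative_imp_deterministic assms(2) that by simp
  then show ?thesis
    using positive_deterministic_imp_non_creative
      positive_if_deterministic_imp_non_creative[OF assms(2)]
    by blast
qed

end
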